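(* Let $\mathcal{G}=(\mathcal{V},\mathcal{E},\mathbf{W})$ be a weighted undirected graph with node set $\mathcal{V}=\{1,\dots,N\}$ and symmetric nonnegative weights $W_{i,j}$, equipped with an arbitrary fixed orientation. Let $\mathcal{F}=\{\mathcal{C}_1,\dots,\mathcal{C}_{|\mathcal{F}|}\}$ be a partition of $\mathcal{V}$ into pairwise disjoint clusters, let $x:\mathcal{V}\to\mathbb{R}$ be any graph signal, and let $\mathcal{M}\subseteq\mathcal{V}$ be a sampling set satisfying NNSP-$\mathcal{F}$ with $\kappa=2$. Then every solution $\hat{x}$ of $$\min_{\tilde{x}:\mathcal{V}\to\mathbb{R}} \|\tilde{x}\|_{\rm TV}\quad\text{subject to}\quad \tilde{x}[i]=x[i]\ \text{for all } i\in\mathcal{M}$$ satisfies $$\|\hat{x}-x\|_{\rm TV}\le 6\min_{\mathbf{a}\in\mathbb{R}^{|\mathcal{F}|}}\Big\|x-\sum_{\mathcal{C}\in\mathcal{F}} a_{\mathcal{C}}\mathcal{I}_{\mathcal{C}}\Big\|_{\rm TV}.$$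
   Context: $\mathcal{I}_{\mathcal{C}}[i]=1$ if $i\in\mathcal{C}$ and $0$ otherwise. For a graph signal $x:\mathcal{V}\to\mathbb{R}$ the total variation is $\|x\|_{\rm TV}=\sum_{\{i,j\}\in\mathcal{E}} W_{i,j}|x[i]-x[j]|$. The orientation declares for each edge $e=\{i,j\}$ one endpoint the head $e^{+}$ and the other the tail $e^{-}$; $\mathcal{N}^{+}(i)$ is the set of neighbours $j$ of $i$ such that $i$ is the head of $\{i,j\}$, and $\mathcal{N}^{-}(i)$ the set of neighbours $j$ such that $i$ is the tail. The boundary of the partition is $\partial\mathcal{F}=\{\{i,j\}\in\mathcal{E}: i\in\mathcal{C}_l, j\in\mathcal{C}_{l'}, l\neq l'\}$. A flow with demands $g:\mathcal{V}\to\mathbb{R}$ is a map $f:\mathcal{E}\to\mathbb{R}$ with $\sum_{j\in\mathcal{N}^{+}(i)} f[\{i,j\}]-\sum_{j\in\mathcal{N}^{-}(i)} f[\{i,j\}]=g[i]$ for every $i\in\mathcal{V}$. "$\mathcal{M}$ satisfies NNSP-$\mathcal{F}$ with $\kappa=2$" means: for every signature $\sigma\in\{-1,1\}^{\partial\mathcal{F}}$ there is a flow $f$ whose demands satisfy $g[i]=0$ for all $i\notin\mathcal{M}$, with $f[e]=2\sigma_e W_e$ for every $e\in\partial\mathcal{F}$ and $|f[e]|\le W_e$ for every $e\in\mathcal{E}\setminus\partial\mathcal{F}$. *)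

theory Defs
  imports "HOL-Analysis.Analysis"
begin

definition is_graph :: "nat \<Rightarrow> nat set set \<Rightarrow> (nat \<Rightarrow> nat \<Rightarrow> real) \<Rightarrow> bool" where
  "is_graph N E W \<longleftrightarrow>
     (\<forall>e\<in>E. \<exists>i j. i \<in> {1..N} \<and> j \<in> {1..N} \<and> i \<noteq> j \<and> e = {i, j}) \<and>
     (\<forall>i j. W i j = W j i) \<and> (\<forall>i j. 0 \<le> W i j)"

definition edge_weight :: "(nat \<Rightarrow> nat \<Rightarrow> real) \<Rightarrow> nat set \<Rightarrow> real" where
  "edge_weight W e = W (Min e) (Max e)"

definition tv :: "nat set set \<Rightarrow> (nat \<Rightarrow> nat \<Rightarrow> real) \<Rightarrow> (nat \<Rightarrow> real) \<Rightarrow> real" where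
  "tv E W x = (\<Sum>e\<in>E. edge_weight W e * \<bar>x (Min e) - x (Max e)\<bar>)"

definition is_orientation :: "nat set set \<Rightarrow> (nat set \<Rightarrow> nat) \<Rightarrow> bool" where
  "is_orientation E head \<longleftrightarrow> (\<forall>e\<in>E. head e \<in> e)"

definition nbr_plus :: "nat set set \<Rightarrow> (nat set \<Rightarrow> nat) \<Rightarrow> nat \<Rightarrow> nat set" where
  "nbr_plus E head i = {j. {i, j} \<in> E \<and> head {i, j} = i}"

definition nbr_minus :: "nat set set \<Rightarrow> (nat set \<Rightarrow> nat) \<Rightarrow> nat \<Rightarrow> nat set" where
  "nbr_minus E head i = {j. {i, j} \<in> E \<and> head {i, j} \<noteq> i}"

definition demand :: "nat set set \<Rightarrow> (nat set \<Rightarrow> nat) \<Rightarrow> (nat set \<Rightarrow> real) \<Rightarrow> nat \<Rightarrow> real" where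
  "demand E head f i =
     (\<Sum>j\<in>nbr_plus E head i. f {i, j}) - (\<Sum>j\<in>nbr_minus E head i. f {i, j})"

definition is_partition :: "nat set \<Rightarrow> nat set set \<Rightarrow> bool" where
  "is_partition V F \<longleftrightarrow> \<Union>F = V \<and> {} \<notin> F \<and>
     (\<forall>C\<in>F. \<forall>C'\<in>F. C \<noteq> C' \<longrightarrow> C \<inter> C' = {})"

definition boundary :: "nat set set \<Rightarrow> nat set set \<Rightarrow> nat set set" where
  "boundary E F = {e\<in>E. \<exists>i j C C'. e = {i, j} \<and> C \<in> F \<and> C' \<in> F \<and> C \<noteq> C' \<and> i \<in> C \<and> j \<in> C'}"

definition NNSP :: "nat \<Rightarrow> nat set set \<Rightarrow> (nat \<Rightarrow> nat \<Rightarrow> real) \<Rightarrow> (nat set \<Rightarrow> nat)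
     \<Rightarrow> nat set set \<Rightarrow> nat set \<Rightarrow> real \<Rightarrow> bool" where
  "NNSP N E W head F M \<kappa> \<longleftrightarrow>
     (\<forall>\<sigma> :: nat set \<Rightarrow> real. (\<forall>e\<in>boundary E F. \<sigma> e \<in> {-1, 1}) \<longrightarrow>
        (\<exists>f :: nat set \<Rightarrow> real.
            (\<forall>i\<in>{1..N}. i \<notin> M \<longrightarrow> demand E head f i = 0) \<and>
            (\<forall>e\<in>boundary E F. f e = \<kappa> * \<sigma> e * edge_weight W e) \<and>
            (\<forall>e\<in>E - boundary E F. \<bar>f e\<bar> \<le> edge_weight W e)))"

end

theory Submission
  imports Defs
begin

text \<open>Let \<open>u = xhat - x\<close>, which vanishes on \<open>M\<close>, and split the edges into the boundary \<open>B\<close>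
  of the partition and the interior \<open>E - B\<close>. Summation by parts pairs \<open>u\<close> with the NNSP flow
  whose boundary values are \<open>2 sgn(u(i) - u(j)) W\<^sub>i\<^sub>j\<close>; the pairing is zero because \<open>u\<close> vanishes
  where the flow has nonzero demand, so \<open>2 TV\<^sub>B(u) \<le> TV\<^sub>E\<^sub>-\<^sub>B(u)\<close>. Optimality of \<open>xhat\<close> and
  the triangle inequality give \<open>TV\<^sub>E\<^sub>-\<^sub>B(u) \<le> TV\<^sub>B(u) + 2 TV\<^sub>E\<^sub>-\<^sub>B(x)\<close>, hence
  \<open>TV(u) \<le> 6 TV\<^sub>E\<^sub>-\<^sub>B(x)\<close>, and \<open>TV\<^sub>E\<^sub>-\<^sub>B(x)\<close> does not change when a signal constant on each
  cluster is subtracted from \<open>x\<close>.\<close>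

lemma is_graph_edgeD:
  assumes "is_graph N E W" and "e \<in> E"
  shows "Min e \<in> {1..N}" "Max e \<in> {1..N}" "Min e \<noteq> Max e" "e = {Min e, Max e}"
    and "e \<subseteq> {1..N}"
proof -
  obtain i j where "i \<in> {1..N}" "j \<in> {1..N}" "i \<noteq> j" "e = {i, j}"
    using assms unfolding is_graph_def by blast
  then show "Min e \<in> {1..N}" "Max e \<in> {1..N}" "Min e \<noteq> Max e" "e = {Min e, Max e}"
    and "e \<subseteq> {1..N}"
    by (auto simp: min_def max_def)
qed

lemma is_graph_finite_edges:
  assumes "is_graph N E W" shows "finite E"
proof (rule finite_subset)
  show "E \<subseteq> Pow {1..N}" using is_graph_edgeD(5)[OF assms] by blast
qed simp

lemma is_graph_edge_weight_nonneg:
  assumes "is_graph N E W" shows "0 \<le> edge_weight W e"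
  using assms unfolding is_graph_def edge_weight_def by blast

lemma sum_neighbours_eq_sum_incident_edges:
  assumes "is_graph N E W"
  shows "(\<Sum>j\<in>{j. {i, j} \<in> E \<and> P {i, j}}. f {i, j}) = (\<Sum>e\<in>{e\<in>E. i \<in> e \<and> P e}. f e)"
proof -
  let ?A = "{j. {i, j} \<in> E \<and> P {i, j}}"
  have "inj_on (\<lambda>j. {i, j}) ?A"
    by (auto simp: inj_on_def doubleton_eq_iff)
  moreover have "(\<lambda>j. {i, j}) ` ?A = {e\<in>E. i \<in> e \<and> P e}"
  proof (intro equalityI subsetI)
    fix e assume e: "e \<in> {e\<in>E. i \<in> e \<and> P e}"
    obtain a b where ab: "e = {a, b}" using assms e unfolding is_graph_def by blast
    then have "e = {i, a} \<or> e = {i, b}" using e by auto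
    then show "e \<in> (\<lambda>j. {i, j}) ` ?A" using e by auto
  qed auto
  ultimately show ?thesis by (metis (no_types, lifting) sum.reindex_cong)
qed

lemma demand_eq_sum_incident_edges:
  assumes "is_graph N E W"
  shows "demand E head f i =
    (\<Sum>e\<in>E. if i \<in> e then (if head e = i then f e else - f e) else 0)"
proof -
  have fin: "finite E" using is_graph_finite_edges[OF assms] .
  have "(\<Sum>e\<in>E. if i \<in> e then (if head e = i then f e else - f e) else 0)
     = (\<Sum>e\<in>E. (if i \<in> e \<and> head e = i then f e else 0) - (if i \<in> e \<and> head e \<noteq> i then f e else 0))"
    by (rule sum.cong) auto
  also have "\<dots> = (\<Sum>e\<in>{e\<in>E. i \<in> e \<and> head e = i}. f e) - (\<Sum>e\<in>{e\<in>E. i \<in> e \<and> head e \<noteq> i}. f e)"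
    by (simp add: sum_subtractf sum.inter_filter[OF fin])
  finally show ?thesis
    unfolding demand_def nbr_plus_def nbr_minus_def
      sum_neighbours_eq_sum_incident_edges[OF assms, where P="\<lambda>e. head e = i"]
      sum_neighbours_eq_sum_incident_edges[OF assms, where P="\<lambda>e. head e \<noteq> i"]
    by (rule sym)
qed

definition edge_sign :: "(nat set \<Rightarrow> nat) \<Rightarrow> nat set \<Rightarrow> real" where
  "edge_sign head e = (if head e = Min e then 1 else -1)"

lemma abs_edge_sign [simp]: "\<bar>edge_sign head e\<bar> = 1"
  by (simp add: edge_sign_def)

lemma sum_potential_times_demand:
  assumes g: "is_graph N E W" and o: "is_orientation E head"
  shows "(\<Sum>i\<in>{1..N}. u i * demand E head f i) =
    (\<Sum>e\<in>E. f e * edge_sign head e * (u (Min e) - u (Max e)))"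
proof -
  define c where "c e i = (if i \<in> e then (if head e = i then f e else - f e) else 0)" for e i
  have "(\<Sum>i\<in>{1..N}. u i * demand E head f i) = (\<Sum>i\<in>{1..N}. \<Sum>e\<in>E. u i * c e i)"
    by (simp add: demand_eq_sum_incident_edges[OF g] c_def sum_distrib_left)
  also have "\<dots> = (\<Sum>e\<in>E. \<Sum>i\<in>{1..N}. u i * c e i)"
    by (rule sum.swap)
  also have "\<dots> = (\<Sum>e\<in>E. f e * edge_sign head e * (u (Min e) - u (Max e)))"
  proof (rule sum.cong[OF refl])
    fix e assume eE: "e \<in> E"
    note ef = is_graph_edgeD[OF g eE]
    have "head e = Min e \<or> head e = Max e"
      using o eE ef(4) unfolding is_orientation_def by blast
    moreover have "(\<Sum>i\<in>{1..N}. u i * c e i) = (\<Sum>i\<in>e. u i * c e i)"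
      by (rule sum.mono_neutral_right) (use ef(5) in \<open>auto simp: c_def\<close>)
    moreover have "\<dots> = u (Min e) * c e (Min e) + u (Max e) * c e (Max e)"
      using ef(3) by (subst ef(4)) simp
    ultimately show "(\<Sum>i\<in>{1..N}. u i * c e i) = f e * edge_sign head e * (u (Min e) - u (Max e))"
      using ef(3,4) unfolding c_def edge_sign_def by (auto simp: algebra_simps)
  qed
  finally show ?thesis .
qed

lemma tv_nonneg:
  assumes "\<forall>e\<in>S. 0 \<le> edge_weight W e" shows "0 \<le> tv S W x"
  unfolding tv_def using assms by (intro sum_nonneg) auto

lemma tv_split:
  assumes "finite E" and "S \<subseteq> E"
  shows "tv E W x = tv S W x + tv (E - S) W x"
  unfolding tv_def using sum.subset_diff[OF assms(2,1)] by (simp add: add.commute)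

lemma tv_diff_le:
  assumes "\<forall>e\<in>S. 0 \<le> edge_weight W e"
  shows "tv S W (\<lambda>i. x i - y i) \<le> tv S W x + tv S W y"
  unfolding tv_def sum.distrib[symmetric]
proof (rule sum_mono)
  fix e assume "e \<in> S"
  have "\<bar>x (Min e) - y (Min e) - (x (Max e) - y (Max e))\<bar>
      \<le> \<bar>x (Min e) - x (Max e)\<bar> + \<bar>y (Min e) - y (Max e)\<bar>" by linarith
  from mult_left_mono[OF this] show "edge_weight W e * \<bar>x (Min e) - y (Min e) - (x (Max e) - y (Max e))\<bar>
      \<le> edge_weight W e * \<bar>x (Min e) - x (Max e)\<bar> + edge_weight W e * \<bar>y (Min e) - y (Max e)\<bar>"
    using assms \<open>e \<in> S\<close> by (simp add: distrib_left)
qed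

lemma NNSP_boundary_tv_le:
  assumes g: "is_graph N E W" and o: "is_orientation E head"
    and nnsp: "NNSP N E W head F M \<kappa>"
    and u0: "\<forall>i\<in>M. u i = 0"
  shows "\<kappa> * tv (boundary E F) W u \<le> tv (E - boundary E F) W u"
proof -
  define B where "B = boundary E F"
  define \<Delta> where "\<Delta> e = edge_sign head e * (u (Min e) - u (Max e))" for e
  define \<sigma> where "\<sigma> e = (if 0 \<le> \<Delta> e then 1 else -1 :: real)" for e
  have "\<forall>e\<in>B. \<sigma> e \<in> {-1, 1}" by (simp add: \<sigma>_def)
  then obtain f where f_dem: "\<forall>i\<in>{1..N}. i \<notin> M \<longrightarrow> demand E head f i = 0"
    and f_bd: "\<forall>e\<in>B. f e = \<kappa> * \<sigma> e * edge_weight W e"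
    and f_int: "\<forall>e\<in>E - B. \<bar>f e\<bar> \<le> edge_weight W e"
    using nnsp unfolding NNSP_def B_def by blast
  have abs_\<Delta>: "\<bar>\<Delta> e\<bar> = \<bar>u (Min e) - u (Max e)\<bar>" for e
    by (simp add: \<Delta>_def abs_mult)
  have "(\<Sum>e\<in>E. f e * \<Delta> e) = (\<Sum>i\<in>{1..N}. u i * demand E head f i)"
    unfolding \<Delta>_def sum_potential_times_demand[OF g o] by (simp add: mult.assoc)
  also have "\<dots> = 0"
    using f_dem u0 by (intro sum.neutral) auto
  also have "(\<Sum>e\<in>E. f e * \<Delta> e) = (\<Sum>e\<in>B. f e * \<Delta> e) + (\<Sum>e\<in>E - B. f e * \<Delta> e)"
    using sum.subset_diff[of B E] is_graph_finite_edges[OF g]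
    unfolding B_def boundary_def by (simp add: add.commute subset_iff)
  finally have pairing: "(\<Sum>e\<in>B. f e * \<Delta> e) + (\<Sum>e\<in>E - B. f e * \<Delta> e) = 0" .
  have "(\<Sum>e\<in>B. f e * \<Delta> e) = \<kappa> * tv B W u"
    unfolding tv_def sum_distrib_left
  proof (rule sum.cong[OF refl])
    fix e assume "e \<in> B"
    have "\<sigma> e * \<Delta> e = \<bar>u (Min e) - u (Max e)\<bar>"
      unfolding abs_\<Delta>[symmetric] \<sigma>_def by simp
    then show "f e * \<Delta> e = \<kappa> * (edge_weight W e * \<bar>u (Min e) - u (Max e)\<bar>)"
      using f_bd \<open>e \<in> B\<close> by (metis mult.assoc mult.left_commute)
  qed
  moreover have "- tv (E - B) W u \<le> (\<Sum>e\<in>E - B. f e * \<Delta> e)"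
    unfolding tv_def sum_negf[symmetric]
  proof (rule sum_mono)
    fix e assume "e \<in> E - B"
    have "\<bar>f e * \<Delta> e\<bar> \<le> edge_weight W e * \<bar>u (Min e) - u (Max e)\<bar>"
      unfolding abs_mult abs_\<Delta> using f_int \<open>e \<in> E - B\<close> by (intro mult_right_mono) auto
    then show "- (edge_weight W e * \<bar>u (Min e) - u (Max e)\<bar>) \<le> f e * \<Delta> e" by linarith
  qed
  ultimately show ?thesis using pairing unfolding B_def by linarith
qed

lemma tv_interior_piecewise_constant:
  assumes g: "is_graph N E W" and part: "is_partition {1..N} F"
  shows "tv (E - boundary E F) W (\<lambda>i. x i - (\<Sum>C\<in>F. a C * indicator C i))
       = tv (E - boundary E F) W x"
  unfolding tv_def
proof (rule sum.cong[OF refl])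
  fix e assume e: "e \<in> E - boundary E F"
  note ef = is_graph_edgeD[OF g, of e]
  obtain C1 where C1: "C1 \<in> F" "Min e \<in> C1" using part ef(1) e unfolding is_partition_def by blast
  obtain C2 where C2: "C2 \<in> F" "Max e \<in> C2" using part ef(2) e unfolding is_partition_def by blast
  have "C1 = C2"
    using e C1 C2 ef(4) unfolding boundary_def by blast
  have "indicator C (Min e) = (indicator C (Max e) :: real)" if "C \<in> F" for C
  proof (cases "C = C1")
    case False
    then have "C \<inter> C1 = {}" using part that C1 unfolding is_partition_def by blast
    then show ?thesis using C1 C2 \<open>C1 = C2\<close> by (auto simp: indicator_def)
  qed (use C1 C2 \<open>C1 = C2\<close> in simp)
  then have "(\<Sum>C\<in>F. a C * indicator C (Min e)) = (\<Sum>C\<in>F. a C * indicator C (Max e) :: real)"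
    by (intro sum.cong) auto
  then show "edge_weight W e * \<bar>x (Min e) - (\<Sum>C\<in>F. a C * indicator C (Min e))
        - (x (Max e) - (\<Sum>C\<in>F. a C * indicator C (Max e)))\<bar>
      = edge_weight W e * \<bar>x (Min e) - x (Max e)\<bar>" by simp
qed

lemma tv_error_le_of_boundary_bound:
  assumes fin: "finite E" and BE: "B \<subseteq> E" and w: "\<forall>e\<in>E. 0 \<le> edge_weight W e"
    and opt: "tv E W xhat \<le> tv E W x"
    and bd: "\<kappa> * tv B W (\<lambda>i. xhat i - x i) \<le> tv (E - B) W (\<lambda>i. xhat i - x i)"
    and \<kappa>: "1 < \<kappa>"
  shows "(\<kappa> - 1) * tv E W (\<lambda>i. xhat i - x i) \<le> 2 * (\<kappa> + 1) * tv (E - B) W x"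
proof -
  define u where "u i = xhat i - x i" for i
  have wB: "\<forall>e\<in>B. 0 \<le> edge_weight W e" and wI: "\<forall>e\<in>E - B. 0 \<le> edge_weight W e"
    using w BE by auto
  have "tv B W x \<le> tv B W xhat + tv B W u"
    using tv_diff_le[OF wB, of xhat u] by (simp add: u_def)
  moreover have "tv (E - B) W u \<le> tv (E - B) W xhat + tv (E - B) W x"
    using tv_diff_le[OF wI] by (simp add: u_def[abs_def])
  moreover have "0 \<le> tv B W u" using tv_nonneg[OF wB] .
  ultimately have "tv (E - B) W u \<le> tv B W u + 2 * tv (E - B) W x"
    using opt tv_split[OF fin BE, of W xhat] tv_split[OF fin BE, of W x] by linarith
  moreover have "\<kappa> * tv B W u \<le> tv (E - B) W u"
    using bd by (simp add: u_def[abs_def])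
  ultimately have "\<kappa> * tv (E - B) W u \<le> \<kappa> * tv B W u + 2 * \<kappa> * tv (E - B) W x"
    using mult_left_mono[of "tv (E - B) W u" "tv B W u + 2 * tv (E - B) W x" \<kappa>] \<kappa>
    by (simp add: distrib_left)
  then have "(\<kappa> - 1) * (tv B W u + tv (E - B) W u) \<le> 2 * (\<kappa> + 1) * tv (E - B) W x"
    using \<open>\<kappa> * tv B W u \<le> tv (E - B) W u\<close> \<open>tv (E - B) W u \<le> tv B W u + 2 * tv (E - B) W x\<close>
    by (simp add: algebra_simps)
  then show ?thesis using tv_split[OF fin BE, of W u] by (simp add: u_def[abs_def])
qed

theorem theorem2:
  fixes N :: nat and E :: "nat set set" and W :: "nat \<Rightarrow> nat \<Rightarrow> real"
    and head :: "nat set \<Rightarrow> nat" and F :: "nat set set" and M :: "nat set"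
    and x xhat :: "nat \<Rightarrow> real"
  assumes graph: "is_graph N E W"
    and orient: "is_orientation E head"
    and part: "is_partition {1..N} F"
    and Msub: "M \<subseteq> {1..N}"
    and nnsp: "NNSP N E W head F M 2"
    and feas: "\<forall>i\<in>M. xhat i = x i"
    and opt: "\<forall>xt :: nat \<Rightarrow> real. (\<forall>i\<in>M. xt i = x i) \<longrightarrow> tv E W xhat \<le> tv E W xt"
  shows "tv E W (\<lambda>i. xhat i - x i)
           \<le> 6 * (INF a \<in> (UNIV :: (nat set \<Rightarrow> real) set).
                    tv E W (\<lambda>i. x i - (\<Sum>C\<in>F. a C * indicator C i)))"
proof -
  let ?B = "boundary E F"
  have fin: "finite E" and BE: "?B \<subseteq> E" and w: "\<forall>e\<in>E. 0 \<le> edge_weight W e"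
    using is_graph_finite_edges[OF graph] is_graph_edge_weight_nonneg[OF graph]
    by (auto simp: boundary_def)
  have "2 * tv ?B W (\<lambda>i. xhat i - x i) \<le> tv (E - ?B) W (\<lambda>i. xhat i - x i)"
    using NNSP_boundary_tv_le[OF graph orient nnsp] feas by simp
  then have err: "tv E W (\<lambda>i. xhat i - x i) \<le> 6 * tv (E - ?B) W x"
    using tv_error_le_of_boundary_bound[OF fin BE w, of xhat x 2] opt by auto
  have bound: "tv E W (\<lambda>i. xhat i - x i) / 6 \<le> tv E W (\<lambda>i. x i - (\<Sum>C\<in>F. a C * indicator C i))"
    for a :: "nat set \<Rightarrow> real"
  proof -
    have "0 \<le> tv ?B W (\<lambda>i. x i - (\<Sum>C\<in>F. a C * indicator C i))"
      using w BE by (intro tv_nonneg) auto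
    then show ?thesis
      using err tv_split[OF fin BE, of W "\<lambda>i. x i - (\<Sum>C\<in>F. a C * indicator C i)"]
        tv_interior_piecewise_constant[OF graph part, of x a] by linarith
  qed
  have "tv E W (\<lambda>i. xhat i - x i) / 6 \<le> (INF a \<in> (UNIV :: (nat set \<Rightarrow> real) set).
                    tv E W (\<lambda>i. x i - (\<Sum>C\<in>F. a C * indicator C i)))"
    by (rule cINF_greatest) (simp, rule bound)
  then show ?thesis by simp
qed

end
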